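(* Let $A$ be a commutative ring. For $X\in B$ and $a_1,\ldots,a_n\in A$ ($n\ge0$) with $E(a_n)\cdots E(a_1)\in B$, let $\langle X,(a_1,\ldots,a_n)\rangle$ denote the class in the edge-path group $\pi_1(Y(A),\infty)$ of the edge loop $(\infty\cdot X,\ \infty\cdot E(a_1)X,\ \infty\cdot E(a_2)E(a_1)X,\ldots,\ \infty\cdot E(a_n)\cdots E(a_1)X)$; write $\langle X\rangle$ when $n=0$, and $T(p):=E(a_n)\cdots E(a_1)X$ for $p=\langle X,(a_1,\ldots,a_n)\rangle$. Then $\pi_1(Y(A),\infty)$ is generated by these symbols, and the following families form a complete set of defining relations: (1) For $p=\langle X,(a_1,\ldots,a_n)\rangle$ and $q=\langle Y,(b_1,\ldots,b_m)\rangle$: $p\cdot q=\langle X,(a_1,\ldots,a_n,b'_1,\ldots,b'_m)\rangle$, where $Z:=YX^{-1}E(a_1)^{-1}\cdots E(a_n)^{-1}=\begin{pmatrix}u&0\\c&u^{-1}\end{pmatrix}\in B$, $b'_1=u^2b_1+cu$, and $b'_j=u^{2(-1)^{j-1}}b_j$ for $j\ge2$. (2) $\langle X\rangle=1$ for all $X\in B$. (3) $\langle X,(a_1,\ldots,a_{n-1},0)\rangle=\langle X,(a_1,\ldots,a_{n-2})\rangle$ and $\langle X,(a_1,\ldots,a_i,0,a_{i+2},\ldots,a_n)\rangle=\langle X,(a_1,\ldots,a_{i-1},a_i+a_{i+2},a_{i+3},\ldots,a_n)\rangle$. (4) For $u\in A^\times$: $\langle X,(a_1,\ldots,a_{n-1},u)\rangle=\langle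 X,(a_1,\ldots,a_{n-2},a_{n-1}-u^{-1})\rangle$ and $\langle X,(a_1,\ldots,a_i,u,a_{i+2},a_{i+3},a_{i+4},\ldots)\rangle=\langle X,(a_1,\ldots,a_{i-1},a_i-u^{-1},u^2a_{i+2}-u,u^{-2}a_{i+3},u^2a_{i+4},\ldots)\rangle$ (subsequent entries multiplied alternately by $u^{-2}$ and $u^{2}$).
   Context: A unimodular row over $A$ is $(a,b)\in A^2$ with $aA+bA=A$. $\Gamma(A)$ is the graph whose vertices are classes of unimodular rows modulo multiplication by units, with $\{[u],[v]\}$ an edge iff the matrix with rows $u,v$ lies in $\mathrm{GL}_2(A)$; $Y(A)$ is its clique complex. $\mathrm{SL}_2(A)$ acts on vertices on the right by $[u]\cdot M=[uM]$; $\infty=[(1,0)]$. $E(a)=\begin{pmatrix}a&1\\-1&0\end{pmatrix}$. $B$ is the group of lower triangular matrices in $\mathrm{SL}_2(A)$ (the stabilizer of $\infty$). The edge-path group $\pi_1(Y(A),\infty)$ consists of edge loops at $\infty$ (sequences of vertices, consecutive ones adjacent, beginning and ending at $\infty$) modulo the equivalence generated by deleting $x_{i+1},x_{i+2}$ when $x_i=x_{i+2}$ and deleting $x_{i+1}$ when $\{x_i,x_{i+1},x_{i+2}\}$ is a 2-simplex; the product is concatenation. *)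

theory Defs
  imports "HOL-Algebra.Generated_Groups"
begin

text \<open>M2 p q r s stands for the matrix with rows (p, q) and (r, s).\<close>
datatype 'a mat2 = M2 'a 'a 'a 'a

fun mmul :: "'a::comm_ring_1 mat2 \<Rightarrow> 'a mat2 \<Rightarrow> 'a mat2" (infixl "**" 70) where
  "M2 a b c d ** M2 a' b' c' d' =
     M2 (a*a' + b*c') (a*b' + b*d') (c*a' + d*c') (c*b' + d*d')"

definition mone :: "'a::comm_ring_1 mat2" where
  "mone = M2 1 0 0 1"

fun mdet :: "'a::comm_ring_1 mat2 \<Rightarrow> 'a" where
  "mdet (M2 a b c d) = a*d - b*c"

text \<open>Inverse of a matrix of determinant 1 (the adjugate).\<close>
fun sl_inv :: "'a::comm_ring_1 mat2 \<Rightarrow> 'a mat2" where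
  "sl_inv (M2 a b c d) = M2 d (-b) (-c) a"

fun m11 :: "'a mat2 \<Rightarrow> 'a" where "m11 (M2 a b c d) = a"
fun m21 :: "'a mat2 \<Rightarrow> 'a" where "m21 (M2 a b c d) = c"

definition SL2 :: "'a::comm_ring_1 mat2 set" where
  "SL2 = {M. mdet M = 1}"

definition Bgrp :: "'a::comm_ring_1 mat2 set" where
  "Bgrp = {M. M \<in> SL2 \<and> (\<exists>a c d. M = M2 a 0 c d)}"

definition Emat :: "'a::comm_ring_1 \<Rightarrow> 'a mat2" where
  "Emat a = M2 a 1 (-1) 0"

text \<open>Eprod [a1,...,an] = E(an) ... E(a1).\<close>
definition Eprod :: "'a::comm_ring_1 list \<Rightarrow> 'a mat2" where
  "Eprod as = foldl (\<lambda>M a. Emat a ** M) mone as"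

definition uinv :: "'a::comm_ring_1 \<Rightarrow> 'a" where
  "uinv u = (SOME v. u * v = 1)"

definition unimod :: "'a::comm_ring_1 \<times> 'a \<Rightarrow> bool" where
  "unimod r \<longleftrightarrow> (\<exists>x y. fst r * x + snd r * y = 1)"

definition vclass :: "'a::comm_ring_1 \<times> 'a \<Rightarrow> ('a \<times> 'a) set" where
  "vclass r = {(u * fst r, u * snd r) | u. u dvd 1}"

definition vertices :: "('a::comm_ring_1 \<times> 'a) set set" where
  "vertices = {vclass r | r. unimod r}"

definition infv :: "('a::comm_ring_1 \<times> 'a) set" where
  "infv = vclass (1, 0)"

fun rowmul :: "'a::comm_ring_1 \<times> 'a \<Rightarrow> 'a mat2 \<Rightarrow> 'a \<times> 'a" where
  "rowmul (x, y) (M2 a b c d) = (x*a + y*c, x*b + y*d)"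

definition vact :: "('a::comm_ring_1 \<times> 'a) set \<Rightarrow> 'a mat2 \<Rightarrow> ('a \<times> 'a) set" where
  "vact v M = vclass (rowmul (SOME r. r \<in> v) M)"

definition adj :: "('a::comm_ring_1 \<times> 'a) set \<Rightarrow> ('a \<times> 'a) set \<Rightarrow> bool" where
  "adj P Q \<longleftrightarrow> P \<in> vertices \<and> Q \<in> vertices \<and>
     (\<exists>r\<in>P. \<exists>s\<in>Q. mdet (M2 (fst r) (snd r) (fst s) (snd s)) dvd 1)"

definition simplex2 :: "('a::comm_ring_1 \<times> 'a) set \<Rightarrow> ('a \<times> 'a) set \<Rightarrow> ('a \<times> 'a) set \<Rightarrow> bool" where
  "simplex2 a b c \<longleftrightarrow> adj a b \<and> adj b c \<and> adj a c"

definition is_loop :: "('a::comm_ring_1 \<times> 'a) set list \<Rightarrow> bool" where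
  "is_loop xs \<longleftrightarrow> xs \<noteq> [] \<and> hd xs = infv \<and> last xs = infv \<and>
     (\<forall>i. Suc i < length xs \<longrightarrow> adj (xs ! i) (xs ! Suc i))"

definition ep_step :: "('a::comm_ring_1 \<times> 'a) set list \<Rightarrow> ('a \<times> 'a) set list \<Rightarrow> bool" where
  "ep_step xs ys \<longleftrightarrow> (\<exists>l a b c r. xs = l @ [a, b, c] @ r \<and>
     ((a = c \<and> ys = l @ [a] @ r) \<or> (simplex2 a b c \<and> ys = l @ [a, c] @ r)))"

definition loop_eq :: "('a::comm_ring_1 \<times> 'a) set list \<Rightarrow> ('a \<times> 'a) set list \<Rightarrow> bool" where
  "loop_eq = equivclp (\<lambda>xs ys. is_loop xs \<and> is_loop ys \<and> ep_step xs ys)"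

definition loop_class :: "('a::comm_ring_1 \<times> 'a) set list \<Rightarrow> ('a \<times> 'a) set list set" where
  "loop_class xs = {ys. loop_eq xs ys}"

definition pi1 :: "('a::comm_ring_1 \<times> 'a) set list set monoid" where
  "pi1 = \<lparr> carrier = {loop_class xs | xs. is_loop xs},
           mult = (\<lambda>P Q. {zs. \<exists>xs\<in>P. \<exists>ys\<in>Q. loop_eq (xs @ tl ys) zs}),
           one = loop_class [infv] \<rparr>"

definition Syms :: "('a::comm_ring_1 mat2 \<times> 'a list) set" where
  "Syms = {(X, as). X \<in> Bgrp \<and> Eprod as ** X \<in> Bgrp}"

definition Tsym :: "'a::comm_ring_1 mat2 \<times> 'a list \<Rightarrow> 'a mat2" where
  "Tsym p = Eprod (snd p) ** fst p"

definition sym_loop :: "'a::comm_ring_1 mat2 \<times> 'a list \<Rightarrow> ('a \<times> 'a) set list" where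
  "sym_loop p = map (\<lambda>k. vact infv (Eprod (take k (snd p)) ** fst p)) [0..<Suc (length (snd p))]"

definition sym :: "'a::comm_ring_1 mat2 \<times> 'a list \<Rightarrow> ('a \<times> 'a) set list set" where
  "sym p = loop_class (sym_loop p)"

text \<open>b'_1 = u^2 b_1 + c u, b'_j = u^(2(-1)^(j-1)) b_j for j >= 2.\<close>
definition twist :: "'a::comm_ring_1 \<Rightarrow> 'a \<Rightarrow> 'a list \<Rightarrow> 'a list" where
  "twist u c bs = map (\<lambda>(k, b). if k = 0 then u^2 * b + c * u
                               else if odd k then (uinv u)^2 * b else u^2 * b)
                      (zip [0..<length bs] bs)"

definition altmul :: "'a::comm_ring_1 \<Rightarrow> 'a list \<Rightarrow> 'a list" where
  "altmul u cs = map (\<lambda>(k, b). if even k then (uinv u)^2 * b else u^2 * b)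
                     (zip [0..<length cs] cs)"

definition concat_sym :: "'a::comm_ring_1 mat2 \<times> 'a list \<Rightarrow> 'a mat2 \<times> 'a list \<Rightarrow> 'a mat2 \<times> 'a list" where
  "concat_sym p q =
     (let Z = fst q ** sl_inv (Tsym p) in (fst p, snd p @ twist (m11 Z) (m21 Z) (snd q)))"

definition rels :: "('c, 'm) monoid_scheme \<Rightarrow> ('a::comm_ring_1 mat2 \<times> 'a list \<Rightarrow> 'c) \<Rightarrow> bool" where
  "rels G g \<longleftrightarrow>
    (\<forall>p\<in>Syms. \<forall>q\<in>Syms. concat_sym p q \<in> Syms \<longrightarrow>
        g p \<otimes>\<^bsub>G\<^esub> g q = g (concat_sym p q)) \<and>
    (\<forall>X\<in>Bgrp. g (X, []) = \<one>\<^bsub>G\<^esub>) \<and>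
    (\<forall>X as a. (X, as @ [a, 0]) \<in> Syms \<longrightarrow> (X, as) \<in> Syms \<longrightarrow>
        g (X, as @ [a, 0]) = g (X, as)) \<and>
    (\<forall>X as a b cs. (X, as @ [a, 0, b] @ cs) \<in> Syms \<longrightarrow> (X, as @ [a + b] @ cs) \<in> Syms \<longrightarrow>
        g (X, as @ [a, 0, b] @ cs) = g (X, as @ [a + b] @ cs)) \<and>
    (\<forall>X as a u. u dvd 1 \<longrightarrow> (X, as @ [a, u]) \<in> Syms \<longrightarrow> (X, as @ [a - uinv u]) \<in> Syms \<longrightarrow>
        g (X, as @ [a, u]) = g (X, as @ [a - uinv u])) \<and>
    (\<forall>X as a u b cs. u dvd 1 \<longrightarrow> (X, as @ [a, u, b] @ cs) \<in> Syms \<longrightarrow>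
        (X, as @ [a - uinv u, u^2 * b - u] @ altmul u cs) \<in> Syms \<longrightarrow>
        g (X, as @ [a, u, b] @ cs) = g (X, as @ [a - uinv u, u^2 * b - u] @ altmul u cs))"

end

theory Submission
  imports Defs
begin

text \<open>
  The neighbours of the vertex \<open>\<infinity>\<cdot>M\<close> (for \<open>M \<in> SL\<^sub>2(A)\<close>) are exactly the vertices
  \<open>\<infinity>\<cdot>E(a)M\<close>. Hence every edge path starting at \<open>\<infinity> = \<infinity>\<cdot>X\<close>, \<open>X \<in> B\<close>, is the path
  \<open>(\<infinity>\<cdot>X, \<infinity>\<cdot>E(a\<^sub>1)X, \<dots>)\<close> of a unique word \<open>a\<^sub>1 \<dots> a\<^sub>n\<close>, and the edge loops are
  the symbols. Replacing \<open>X\<close> by \<open>ZX\<close> with \<open>Z \<in> B\<close> multiplies the entries of the word as in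
  relation (1), which is therefore concatenation of loops. Moreover \<open>\<infinity>\<cdot>E(y)E(x)M\<close> equals
  \<open>\<infinity>\<cdot>M\<close> iff \<open>y = 0\<close> and is adjacent to it iff \<open>y\<close> is a unit, and in these cases
  \<open>E(0)E(x) \<in> B\<close>, resp. \<open>E(y)E(x) \<in> B\<cdot>E(x - y\<^sup>-\<^sup>1)\<close>. So the elementary moves
  of the edge-path group (removing a backtrack, shortcutting a triangle) are, on words, exactly
  the relations (3) and (4). A function on symbols respecting (1)-(4) is thus constant on
  classes of loops, and (1) makes the induced map a homomorphism.
\<close>

section \<open>Matrices and units\<close>

lemma mmul_assoc: "(A ** B) ** C = A ** (B ** (C::'a::comm_ring_1 mat2))"
  by (cases A; cases B; cases C) (simp add: algebra_simps)

lemma mone_mmul [simp]: "mone ** A = (A::'a::comm_ring_1 mat2)"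
  by (cases A) (simp add: mone_def)

lemma mmul_mone [simp]: "A ** mone = (A::'a::comm_ring_1 mat2)"
  by (cases A) (simp add: mone_def)

lemma mdet_mmul: "mdet (A ** B) = mdet A * mdet (B::'a::comm_ring_1 mat2)"
  by (cases A; cases B) (simp add: algebra_simps)

lemma mdet_mone [simp]: "mdet (mone :: 'a::comm_ring_1 mat2) = 1"
  by (simp add: mone_def)

lemma mdet_Emat [simp]: "mdet (Emat a) = 1"
  by (simp add: Emat_def)

lemma mdet_sl_inv [simp]: "mdet (sl_inv M) = mdet (M::'a::comm_ring_1 mat2)"
  by (cases M) (simp add: algebra_simps)

lemma sl_inv_sl_inv [simp]: "sl_inv (sl_inv M) = (M::'a::comm_ring_1 mat2)"
  by (cases M) simp

lemma sl_inv_mmul: "mdet T = 1 \<Longrightarrow> sl_inv T ** T = (mone::'a::comm_ring_1 mat2)"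
  by (cases T) (simp add: mone_def algebra_simps)

lemma foldl_Emat: "foldl (\<lambda>M a. Emat a ** M) N as = Eprod as ** N"
proof (induction as arbitrary: N)
  case Nil
  then show ?case by (simp add: Eprod_def)
next
  case (Cons a as)
  have "foldl (\<lambda>M a. Emat a ** M) N (a # as) = Eprod as ** (Emat a ** N)"
    by (simp add: Cons)
  also have "\<dots> = Eprod (a # as) ** N"
    using Cons[of "Emat a ** mone"] by (simp add: Eprod_def mmul_assoc)
  finally show ?case .
qed

lemma Eprod_Nil [simp]: "Eprod [] = mone"
  by (simp add: Eprod_def)

lemma Eprod_append: "Eprod (as @ bs) = Eprod bs ** Eprod as"
proof -
  have "Eprod (as @ bs) = foldl (\<lambda>M a. Emat a ** M) (Eprod as) bs"
    by (simp add: Eprod_def)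
  then show ?thesis
    by (simp add: foldl_Emat)
qed

lemma Eprod_Cons: "Eprod (a # as) = Eprod as ** Emat a"
  using Eprod_append[of "[a]" as] by (simp add: Eprod_def)

lemma mdet_Eprod [simp]: "mdet (Eprod as) = 1"
  by (induction as) (simp_all add: Eprod_Cons mdet_mmul)

lemma Bgrp_mdet: "X \<in> Bgrp \<Longrightarrow> mdet X = 1"
  by (simp add: Bgrp_def SL2_def)

lemma mone_in_Bgrp: "mone \<in> Bgrp"
  by (simp add: Bgrp_def SL2_def mone_def)

lemma Bgrp_mmul_sl_inv:
  assumes "Y \<in> Bgrp" "T \<in> Bgrp"
  shows "Y ** sl_inv T \<in> Bgrp"
proof -
  have "mdet (Y ** sl_inv T) = 1"
    using assms by (simp add: Bgrp_mdet mdet_mmul)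
  moreover obtain y1 y3 y4 t1 t3 t4 where "Y = M2 y1 0 y3 y4" "T = M2 t1 0 t3 t4"
    using assms by (auto simp: Bgrp_def)
  ultimately show ?thesis
    by (simp add: Bgrp_def SL2_def)
qed

lemma unit_mult: "(u::'a::comm_ring_1) dvd 1 \<Longrightarrow> w dvd 1 \<Longrightarrow> u * w dvd 1"
  using mult_dvd_mono[of u 1 w 1] by simp

lemma uinv_right:
  assumes "(u::'a::comm_ring_1) dvd 1"
  shows "u * uinv u = 1"
proof -
  from assms obtain v where "1 = u * v"
    by (rule dvdE)
  then have "\<exists>v. u * v = 1"
    by (intro exI[of _ v]) simp
  then show ?thesis
    unfolding uinv_def by (rule someI_ex)
qed

lemma uinv_left: "(u::'a::comm_ring_1) dvd 1 \<Longrightarrow> uinv u * u = 1"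
  using uinv_right by (simp add: mult.commute)

lemma uinv_eq:
  assumes "(u::'a::comm_ring_1) * v = 1"
  shows "uinv u = v"
proof -
  have "u dvd 1"
    using assms by (intro dvdI[of _ _ v]) simp
  then have "uinv u = uinv u * (u * v)"
    using assms by simp
  also have "\<dots> = v"
    using uinv_left[OF \<open>u dvd 1\<close>] by (simp add: mult.assoc[symmetric])
  finally show ?thesis .
qed

lemma uinv_unit: "(u::'a::comm_ring_1) dvd 1 \<Longrightarrow> uinv u dvd 1"
  using uinv_left by (intro dvdI[of _ _ u]) simp

lemma uinv_uinv: "(u::'a::comm_ring_1) dvd 1 \<Longrightarrow> uinv (uinv u) = u"
  using uinv_left by (intro uinv_eq)

lemma altmul_Nil [simp]: "altmul u [] = []"
  by (simp add: altmul_def)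

lemma altmul_Cons:
  assumes "u dvd 1"
  shows "altmul u (c # cs) = uinv u ^ 2 * c # altmul (uinv u) cs"
proof (rule nth_equalityI)
  show "length (altmul u (c # cs)) = length (uinv u ^ 2 * c # altmul (uinv u) cs)"
    by (simp add: altmul_def)
next
  fix k assume k: "k < length (altmul u (c # cs))"
  show "altmul u (c # cs) ! k = (uinv u ^ 2 * c # altmul (uinv u) cs) ! k"
  proof (cases k)
    case 0
    then show ?thesis by (simp add: altmul_def del: upt_Suc)
  next
    case (Suc j)
    with k have "j < length cs" by (simp add: altmul_def)
    with Suc show ?thesis
      by (simp add: altmul_def uinv_uinv[OF assms] del: upt_Suc)
  qed
qed

lemma twist_Nil [simp]: "twist u c [] = []"
  by (simp add: twist_def)

lemma twist_Cons: "twist u c (b # bs) = (u^2 * b + c * u) # altmul u bs"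
proof (rule nth_equalityI)
  show "length (twist u c (b # bs)) = length ((u^2 * b + c * u) # altmul u bs)"
    by (simp add: twist_def altmul_def)
next
  fix k assume k: "k < length (twist u c (b # bs))"
  show "twist u c (b # bs) ! k = ((u^2 * b + c * u) # altmul u bs) ! k"
  proof (cases k)
    case 0
    then show ?thesis by (simp add: twist_def del: upt_Suc)
  next
    case (Suc j)
    with k have "j < length bs" by (simp add: twist_def)
    with Suc show ?thesis
      by (simp add: twist_def altmul_def del: upt_Suc)
  qed
qed

section \<open>Vertices and adjacency\<close>

lemma vclass_scale:
  assumes "w dvd 1"
  shows "vclass (w * x, w * y) = vclass (x, y)"
proof (intro equalityI subsetI)
  fix r assume "r \<in> vclass (w * x, w * y)"
  then obtain u where "u dvd 1" "r = ((u * w) * x, (u * w) * y)"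
    by (auto simp: vclass_def mult.assoc)
  then show "r \<in> vclass (x, y)"
    using unit_mult[OF _ assms] by (auto simp: vclass_def)
next
  fix r assume "r \<in> vclass (x, y)"
  then obtain u where u: "u dvd 1" "r = (u * x, u * y)"
    by (auto simp: vclass_def)
  have cancel: "u * uinv w * (w * z) = u * z" for z
  proof -
    have "u * uinv w * (w * z) = u * (uinv w * w) * z"
      by (simp only: mult.assoc)
    then show ?thesis
      using uinv_left[OF assms] by simp
  qed
  have "u * uinv w dvd 1"
    using unit_mult[OF u(1) uinv_unit[OF assms]] .
  then show "r \<in> vclass (w * x, w * y)"
    unfolding vclass_def using u(2) cancel by (auto intro!: exI[of _ "u * uinv w"])
qed

lemma self_in_vclass: "r \<in> vclass r"
  unfolding vclass_def by (auto intro!: exI[of _ 1])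

lemma vclass_eq_iff:
  "vclass (x, y) = vclass (x', y') \<longleftrightarrow> (\<exists>w. w dvd 1 \<and> x' = w * x \<and> y' = w * y)"
proof
  assume "vclass (x, y) = vclass (x', y')"
  then have "(x', y') \<in> vclass (x, y)"
    using self_in_vclass by metis
  then show "\<exists>w. w dvd 1 \<and> x' = w * x \<and> y' = w * y"
    by (auto simp: vclass_def)
qed (auto simp: vclass_scale)

definition rdet :: "'a::comm_ring_1 \<times> 'a \<Rightarrow> 'a \<times> 'a \<Rightarrow> 'a" where
  "rdet r s = fst r * snd s - snd r * fst s"

lemma unimod_iff_rdet: "unimod r \<longleftrightarrow> (\<exists>s. rdet r s = 1)"
proof
  assume "unimod r"
  then obtain x y where "fst r * x + snd r * y = 1"
    unfolding unimod_def by auto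
  then have "rdet r (- y, x) = 1"
    by (simp add: rdet_def algebra_simps)
  then show "\<exists>s. rdet r s = 1" ..
next
  assume "\<exists>s. rdet r s = 1"
  then obtain s where "fst r * snd s + snd r * (- fst s) = 1"
    by (auto simp: rdet_def algebra_simps)
  then show "unimod r"
    unfolding unimod_def by blast
qed

lemma unimod_scale:
  assumes "w dvd 1"
  shows "unimod (w * x, w * y) \<longleftrightarrow> unimod (x, y)"
proof
  assume "unimod (w * x, w * y)"
  then obtain a b where "w * x * a + w * y * b = 1"
    unfolding unimod_def by auto
  then have "x * (w * a) + y * (w * b) = 1"
    by (simp add: algebra_simps)
  then show "unimod (x, y)"
    unfolding unimod_def by auto
next
  assume "unimod (x, y)"
  then obtain a b where ab: "x * a + y * b = 1"
    unfolding unimod_def by auto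
  have "w * x * (uinv w * a) + w * y * (uinv w * b) = (w * uinv w) * (x * a + y * b)"
    by (simp add: algebra_simps)
  then have "w * x * (uinv w * a) + w * y * (uinv w * b) = 1"
    using ab uinv_right[OF assms] by simp
  then show "unimod (w * x, w * y)"
    unfolding unimod_def by auto
qed

lemma vclass_in_vertices_iff: "vclass (x, y) \<in> vertices \<longleftrightarrow> unimod (x, y)"
proof
  assume "vclass (x, y) \<in> vertices"
  then obtain x' y' where "unimod (x', y')" "vclass (x', y') = vclass (x, y)"
    unfolding vertices_def by auto
  then show "unimod (x, y)"
    using unimod_scale by (auto simp: vclass_eq_iff)
qed (auto simp: vertices_def)

lemma adj_vclass_iff:
  "adj (vclass (x, y)) (vclass (x', y')) \<longleftrightarrow>
     unimod (x, y) \<and> unimod (x', y') \<and> rdet (x, y) (x', y') dvd 1"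
proof -
  have "(\<exists>r\<in>vclass (x, y). \<exists>s\<in>vclass (x', y'). mdet (M2 (fst r) (snd r) (fst s) (snd s)) dvd 1)
     \<longleftrightarrow> rdet (x, y) (x', y') dvd 1"
  proof
    assume "\<exists>r\<in>vclass (x, y). \<exists>s\<in>vclass (x', y'). mdet (M2 (fst r) (snd r) (fst s) (snd s)) dvd 1"
    then obtain u v where "mdet (M2 (u * x) (u * y) (v * x') (v * y')) dvd 1"
      by (auto simp: vclass_def)
    moreover have "mdet (M2 (u * x) (u * y) (v * x') (v * y')) = (u * v) * rdet (x, y) (x', y')"
      by (simp add: rdet_def algebra_simps)
    ultimately show "rdet (x, y) (x', y') dvd 1"
      by (metis dvd_mult_right)
  next
    assume "rdet (x, y) (x', y') dvd 1"
    then show "\<exists>r\<in>vclass (x, y). \<exists>s\<in>vclass (x', y'). mdet (M2 (fst r) (snd r) (fst s) (snd s)) dvd 1"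
      using self_in_vclass[of "(x, y)"] self_in_vclass[of "(x', y')"]
      by (intro bexI) (auto simp: rdet_def)
  qed
  then show ?thesis
    unfolding adj_def vclass_in_vertices_iff by blast
qed

lemma adj_sym: "adj P Q \<Longrightarrow> adj Q P"
  unfolding adj_def by (metis minus_dvd_iff mdet.simps minus_diff_eq mult.commute)

lemma rowmul_scale:
  "rowmul (w * x, w * y) M = (w * fst (rowmul (x, y) M), w * snd (rowmul (x, y) M))"
  by (cases M) (simp add: algebra_simps)

lemma rowmul_sl_inv:
  assumes "mdet M = 1"
  shows "rowmul (rowmul r M) (sl_inv M) = r"
proof -
  obtain a b c d x y where M: "M = M2 a b c d" and r: "r = (x, y)"
    by (cases M; cases r) auto
  have "rowmul (rowmul r M) (sl_inv M) = (x * mdet M, y * mdet M)"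
    by (simp add: M r algebra_simps)
  then show ?thesis
    using assms r by simp
qed

lemma vclass_rowmul:
  assumes "vclass r = vclass s"
  shows "vclass (rowmul r M) = vclass (rowmul s M)"
proof -
  obtain x y x' y' where rs: "r = (x, y)" "s = (x', y')"
    by fastforce
  from assms obtain w where w: "w dvd 1" "x' = w * x" "y' = w * y"
    by (auto simp: rs vclass_eq_iff)
  then have "rowmul s M = (w * fst (rowmul r M), w * snd (rowmul r M))"
    using rowmul_scale rs by simp
  then show ?thesis
    using vclass_scale[OF w(1)] by (metis prod.collapse)
qed

lemma vclass_rowmul_iff:
  "mdet M = 1 \<Longrightarrow> vclass (rowmul r M) = vclass (rowmul s M) \<longleftrightarrow> vclass r = vclass s"
  using vclass_rowmul[of "rowmul r M" "rowmul s M" "sl_inv M"] rowmul_sl_inv vclass_rowmul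
  by metis

lemma rdet_rowmul: "rdet (rowmul r M) (rowmul s M) = rdet r s * mdet M"
  by (cases M; cases r; cases s) (simp add: rdet_def algebra_simps)

lemma unimod_rowmul: "mdet M = 1 \<Longrightarrow> unimod (rowmul r M) \<longleftrightarrow> unimod r"
  unfolding unimod_iff_rdet by (metis mult_1_right rdet_rowmul rowmul_sl_inv)

lemma adj_rowmul_iff:
  "mdet M = 1 \<Longrightarrow> adj (vclass (rowmul r M)) (vclass (rowmul s M)) \<longleftrightarrow> adj (vclass r) (vclass s)"
  using adj_vclass_iff[of "fst (rowmul r M)" "snd (rowmul r M)" "fst (rowmul s M)" "snd (rowmul s M)"]
    adj_vclass_iff[of "fst r" "snd r" "fst s" "snd s"]
  by (simp add: unimod_rowmul rdet_rowmul)

fun row1 :: "'a mat2 \<Rightarrow> 'a \<times> 'a" where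
  "row1 (M2 a b c d) = (a, b)"

definition vtx :: "'a::comm_ring_1 mat2 \<Rightarrow> ('a \<times> 'a) set" where
  "vtx M = vclass (row1 M)"

lemma vact_infv: "vact infv (M::'a::comm_ring_1 mat2) = vtx M"
proof -
  have "\<exists>r. r \<in> (infv :: ('a \<times> 'a) set)"
    unfolding infv_def using self_in_vclass by blast
  then have "(SOME r. r \<in> infv) \<in> (infv :: ('a \<times> 'a) set)"
    by (rule someI_ex)
  then obtain u :: 'a where u: "u dvd 1" "(SOME r. r \<in> infv) = (u, 0)"
    by (auto simp: infv_def vclass_def)
  obtain a b c d where "M = M2 a b c d"
    by (cases M)
  then show ?thesis
    unfolding vact_def u(2) by (simp add: vtx_def vclass_scale[OF u(1)])
qed

lemma row1_mmul: "row1 (N ** M) = rowmul (row1 N) M"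
  by (cases N; cases M) simp

lemma vtx_mmul_eq_iff: "mdet M = 1 \<Longrightarrow> vtx (N ** M) = vtx (N' ** M) \<longleftrightarrow> vtx N = vtx N'"
  unfolding vtx_def row1_mmul by (rule vclass_rowmul_iff)

lemma adj_vtx_mmul_iff:
  "mdet M = 1 \<Longrightarrow> adj (vtx (N ** M)) (vtx (N' ** M)) \<longleftrightarrow> adj (vtx N) (vtx N')"
  unfolding vtx_def row1_mmul by (rule adj_rowmul_iff)

lemma vtx_lower_mmul: "l dvd 1 \<Longrightarrow> vtx (M2 l 0 m n ** M) = vtx M"
  by (cases M) (simp add: vtx_def vclass_scale)

lemma vtx_mone: "vtx mone = infv"
  by (simp add: vtx_def mone_def infv_def)

lemma vtx_eq_infv_iff:
  assumes "mdet M = 1"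
  shows "vtx M = infv \<longleftrightarrow> M \<in> Bgrp"
proof -
  obtain a b c d where M: "M = M2 a b c d"
    by (cases M)
  have "vtx M = infv \<longleftrightarrow> (\<exists>w. w dvd 1 \<and> a = w \<and> b = 0)"
    using vclass_eq_iff[of 1 0 a b] by (auto simp: M vtx_def infv_def)
  also have "\<dots> \<longleftrightarrow> b = 0"
    using assms by (auto simp: M intro: dvdI[of _ _ d])
  finally show ?thesis
    using assms by (auto simp: M Bgrp_def SL2_def)
qed

lemma adj_vtx_Emat:
  assumes M: "mdet M = 1"
  shows "adj (vtx M) (vtx (Emat a ** M))"
proof -
  have "unimod (1::'a, 0::'a)"
    unfolding unimod_def by (rule exI[of _ 1], rule exI[of _ 0]) simp
  moreover have "unimod (a, 1)"
    unfolding unimod_def by (rule exI[of _ 0], rule exI[of _ 1]) simp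
  ultimately have "adj (vtx mone) (vtx (Emat a))"
    by (simp add: vtx_def mone_def Emat_def adj_vclass_iff rdet_def)
  then show ?thesis
    using adj_vtx_mmul_iff[OF M, of mone "Emat a"] by simp
qed

lemma adj_vtx_imp_Emat:
  assumes M: "mdet M = 1" and "adj (vtx M) Q"
  shows "\<exists>a. Q = vtx (Emat a ** M)"
proof -
  from assms(2) obtain s where Q: "Q = vclass s"
    unfolding adj_def vertices_def by auto
  define s' where "s' = rowmul s (sl_inv M)"
  have s: "s = rowmul s' M"
    unfolding s'_def using rowmul_sl_inv[of "sl_inv M" s] M by simp
  have "adj (vclass (rowmul (1, 0) M)) (vclass (rowmul s' M))"
    using assms(2) M by (cases M) (simp add: vtx_def Q s)
  then have "adj (vclass (1, 0)) (vclass (fst s', snd s'))"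
    using adj_rowmul_iff[OF M] by simp
  then have unit: "snd s' dvd 1"
    using adj_vclass_iff[of 1 0 "fst s'" "snd s'"] by (simp add: rdet_def)
  have "vclass s' = vclass (uinv (snd s') * fst s', uinv (snd s') * snd s')"
    using vclass_scale[OF uinv_unit[OF unit], of "fst s'" "snd s'"] by simp
  also have "\<dots> = vclass (row1 (Emat (uinv (snd s') * fst s')))"
    using uinv_left[OF unit] by (simp add: Emat_def)
  finally have "Q = vtx (Emat (uinv (snd s') * fst s') ** M)"
    unfolding Q s vtx_def row1_mmul by (rule vclass_rowmul)
  then show ?thesis ..
qed

lemma vtx_Emat_inj:
  assumes "mdet M = 1" "vtx (Emat a ** M) = vtx (Emat b ** M)"
  shows "a = b"
proof -
  have "vclass (a, 1) = vclass (b, 1)"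
    using assms vtx_mmul_eq_iff by (fastforce simp: vtx_def Emat_def)
  then show ?thesis
    by (auto simp: vclass_eq_iff)
qed

lemma Emat_Emat: "Emat y ** Emat x = M2 (y * x - 1) y (- x) (-1)"
  by (simp add: Emat_def)

lemma vtx_Emat_Emat_eq_imp_zero:
  assumes M: "mdet M = 1" and "vtx (Emat y ** (Emat x ** M)) = vtx M"
  shows "y = 0"
proof -
  have "vtx (mone ** M) = vtx ((Emat y ** Emat x) ** M)"
    using assms(2) by (simp add: mmul_assoc)
  then have "vclass (1, 0) = vclass (y * x - 1, y)"
    using vtx_mmul_eq_iff[OF M] by (simp add: vtx_def Emat_Emat mone_def)
  then show ?thesis
    by (auto simp: vclass_eq_iff)
qed

lemma adj_vtx_Emat_Emat_imp_unit:
  assumes M: "mdet M = 1" and "adj (vtx M) (vtx (Emat y ** (Emat x ** M)))"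
  shows "y dvd 1"
proof -
  have "adj (vtx (mone ** M)) (vtx ((Emat y ** Emat x) ** M))"
    using assms(2) by (simp add: mmul_assoc)
  then have "adj (vclass (1, 0)) (vclass (y * x - 1, y))"
    using adj_vtx_mmul_iff[OF M] by (simp add: vtx_def Emat_Emat mone_def)
  then show ?thesis
    by (simp add: adj_vclass_iff rdet_def)
qed

section \<open>Walks of elementary matrices\<close>

fun Ewalk :: "'a::comm_ring_1 mat2 \<Rightarrow> 'a list \<Rightarrow> ('a \<times> 'a) set list" where
  "Ewalk M [] = [vtx M]"
| "Ewalk M (a # as) = vtx M # Ewalk (Emat a ** M) as"

lemma sym_loop_eq_Ewalk: "sym_loop (X, as) = Ewalk X (as :: 'a::comm_ring_1 list)"
proof -
  have "map (\<lambda>k. vact infv (Eprod (take k as) ** X)) [0..<Suc (length as)] = Ewalk X as"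
    for as :: "'a list" and X
  proof (induction as arbitrary: X)
    case Nil
    then show ?case by (simp add: vact_infv)
  next
    case (Cons a as)
    have "[0..<Suc (length (a # as))] = 0 # map Suc [0..<Suc (length as)]"
      by (subst upt_conv_Cons) (simp, simp only: map_Suc_upt length_Cons)
    then show ?case
      using Cons[of "Emat a ** X"] by (simp add: vact_infv Eprod_Cons mmul_assoc comp_def del: upt_Suc)
  qed
  then show ?thesis
    by (simp add: sym_loop_def)
qed

lemma length_Ewalk [simp]: "length (Ewalk M as) = Suc (length as)"
  by (induction as arbitrary: M) auto

lemma Ewalk_ne [simp]: "Ewalk M as \<noteq> []"
  by (cases as) auto

lemma hd_Ewalk [simp]: "hd (Ewalk M as) = vtx M"
  by (cases as) auto

lemma last_Ewalk: "last (Ewalk M as) = vtx (Eprod as ** M)"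
  by (induction as arbitrary: M) (auto simp: Eprod_Cons mmul_assoc)

lemma Ewalk_append: "Ewalk M (as @ bs) = butlast (Ewalk M as) @ Ewalk (Eprod as ** M) bs"
  by (induction as arbitrary: M) (auto simp: Eprod_Cons mmul_assoc)

lemma successively_adj_Ewalk: "mdet M = 1 \<Longrightarrow> successively adj (Ewalk M as)"
proof (induction as arbitrary: M)
  case (Cons a as)
  then show ?case
    using adj_vtx_Emat[OF Cons.prems] by (cases as) (simp_all add: mdet_mmul)
qed simp

lemma is_loop_iff: "is_loop xs \<longleftrightarrow> xs \<noteq> [] \<and> hd xs = infv \<and> last xs = infv \<and> successively adj xs"
  unfolding is_loop_def successively_conv_nth by blast

lemma Syms_iff_is_loop: "(X, as) \<in> Syms \<longleftrightarrow> mdet X = 1 \<and> is_loop (Ewalk X as)"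
  using vtx_eq_infv_iff[of X] vtx_eq_infv_iff[of "Eprod as ** X"] Bgrp_mdet[of X]
  by (auto simp: Syms_def is_loop_iff last_Ewalk mdet_mmul successively_adj_Ewalk)

lemma Ewalk_inj: "mdet M = 1 \<Longrightarrow> Ewalk M as = Ewalk M bs \<Longrightarrow> as = bs"
proof (induction as arbitrary: bs M)
  case Nil
  then show ?case by (cases bs) (auto dest: sym)
next
  case (Cons a as)
  then obtain b bs' where bs: "bs = b # bs'"
    by (cases bs) auto
  with Cons.prems have "Ewalk (Emat a ** M) as = Ewalk (Emat b ** M) bs'"
    by simp
  moreover from this have "a = b"
    using vtx_Emat_inj[OF Cons.prems(1)] by (metis hd_Ewalk)
  ultimately show ?case
    using Cons.IH[of "Emat a ** M"] Cons.prems(1) bs by (simp add: mdet_mmul)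
qed

lemma walk_eq_Ewalk:
  "mdet M = 1 \<Longrightarrow> successively adj (vtx M # ys) \<Longrightarrow> \<exists>as. Ewalk M as = vtx M # ys"
proof (induction ys arbitrary: M)
  case Nil
  then show ?case
    by (intro exI[of _ "[]"]) simp
next
  case (Cons y ys)
  then have "adj (vtx M) y" "successively adj (y # ys)"
    by (simp_all add: successively_Cons)
  then obtain a where "y = vtx (Emat a ** M)"
    using adj_vtx_imp_Emat Cons.prems(1) by blast
  with Cons.IH[of "Emat a ** M"] Cons.prems(1) \<open>successively adj (y # ys)\<close>
  obtain as where "Ewalk (Emat a ** M) as = y # ys"
    by (auto simp: mdet_mmul)
  then have "Ewalk M (a # as) = vtx M # y # ys"
    by simp
  then show ?case ..
qed

lemma is_loop_eq_Ewalk: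
  assumes "is_loop xs"
  shows "\<exists>as. Ewalk mone as = xs"
proof -
  from assms obtain ys where "xs = vtx mone # ys" "successively adj xs"
    unfolding is_loop_iff vtx_mone by (metis list.collapse)
  then show ?thesis
    using walk_eq_Ewalk[of mone ys] by auto
qed

lemma Ewalk_split:
  assumes "Ewalk M as = l @ v # vs"
  shows "\<exists>pre as'. as = pre @ as' \<and> l = butlast (Ewalk M pre) \<and> Ewalk (Eprod pre ** M) as' = v # vs"
proof (intro exI conjI)
  have "length l \<le> length as"
    using arg_cong[OF assms, of length] by simp
  then have "length (butlast (Ewalk M (take (length l) as))) = length l"
    by simp
  moreover have "butlast (Ewalk M (take (length l) as)) @ Ewalk (Eprod (take (length l) as) ** M) (drop (length l) as)
      = l @ v # vs"
    using assms Ewalk_append[of M "take (length l) as" "drop (length l) as"] by simp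
  ultimately show "l = butlast (Ewalk M (take (length l) as))"
    and "Ewalk (Eprod (take (length l) as) ** M) (drop (length l) as) = v # vs"
    by simp_all
qed simp

lemma Ewalk_altmul: "u dvd 1 \<Longrightarrow> Ewalk (M2 (uinv u) 0 0 u ** M) cs = Ewalk M (altmul u cs)"
proof (induction cs arbitrary: u M)
  case Nil
  then show ?case
    using vtx_lower_mmul[OF uinv_unit] by simp
next
  case (Cons c cs)
  have "Emat c ** M2 (uinv u) 0 0 u = M2 (uinv (uinv u)) 0 0 (uinv u) ** Emat (uinv u ^ 2 * c)"
  proof -
    have "u * (uinv u ^ 2 * c) = (u * uinv u) * (uinv u * c)"
      by (simp add: power2_eq_square mult_ac)
    then have "u * (uinv u ^ 2 * c) = c * uinv u"
      using uinv_right[OF Cons.prems] by (simp add: mult.commute)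
    then show ?thesis
      by (simp add: Emat_def uinv_uinv[OF Cons.prems])
  qed
  then have "Emat c ** (M2 (uinv u) 0 0 u ** M)
      = M2 (uinv (uinv u)) 0 0 (uinv u) ** (Emat (uinv u ^ 2 * c) ** M)"
    by (metis mmul_assoc)
  then have "Ewalk (Emat c ** (M2 (uinv u) 0 0 u ** M)) cs
      = Ewalk (Emat (uinv u ^ 2 * c) ** M) (altmul (uinv u) cs)"
    using Cons.IH[OF uinv_unit[OF Cons.prems]] by simp
  then show ?case
    using vtx_lower_mmul[OF uinv_unit[OF Cons.prems]] by (simp add: altmul_Cons[OF Cons.prems])
qed

lemma Ewalk_twist:
  assumes "d * d' = 1"
  shows "Ewalk (M2 d 0 e d' ** M) bs = Ewalk M (twist d e bs)"
proof (cases bs)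
  case Nil
  then show ?thesis
    using assms vtx_lower_mmul[of d] by (simp add: dvdI[of 1 d d'] mult.commute)
next
  case (Cons b cs)
  have d: "d dvd 1"
    using assms by (intro dvdI[of _ _ d']) simp
  have "Emat b ** M2 d 0 e d' = M2 (uinv d) 0 0 d ** Emat (d^2 * b + e * d)"
  proof -
    have "d' * (d^2 * b + e * d) = (d * d') * (d * b) + (d * d') * e"
      by (simp add: power2_eq_square algebra_simps)
    then have "d' * (d^2 * b + e * d) = b * d + e"
      using assms by (simp add: mult.commute)
    then show ?thesis
      by (simp add: Emat_def uinv_eq[OF assms])
  qed
  then have "Emat b ** (M2 d 0 e d' ** M) = M2 (uinv d) 0 0 d ** (Emat (d^2 * b + e * d) ** M)"
    by (metis mmul_assoc)
  then have "Ewalk (Emat b ** (M2 d 0 e d' ** M)) cs = Ewalk (Emat (d^2 * b + e * d) ** M) (altmul d cs)"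
    using Ewalk_altmul[OF d] by simp
  then show ?thesis
    using vtx_lower_mmul[OF d] by (simp add: Cons twist_Cons)
qed

lemma altmul_minus_one [simp]: "altmul (-1) cs = (cs::'a::comm_ring_1 list)"
proof -
  have "uinv (-1::'a) = -1"
    by (rule uinv_eq) simp
  then show ?thesis
    by (intro nth_equalityI) (simp_all add: altmul_def)
qed

lemma Ewalk_zero:
  "Ewalk M (a # 0 # cs) = vtx M # vtx (Emat a ** M) # Ewalk M (twist (-1) (-a) cs)"
proof -
  have "Emat 0 ** (Emat a ** M) = M2 (-1) 0 (-a) (-1) ** M"
    by (simp add: Emat_def flip: mmul_assoc)
  then show ?thesis
    using Ewalk_twist[of "-1" "-1" "-a" M cs] by simp
qed

lemma Ewalk_unit:
  assumes "u dvd 1"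
  shows "Ewalk M (a # u # cs) =
    vtx M # vtx (Emat a ** M) # Ewalk (Emat (a - uinv u) ** M) (twist u (-1) cs)"
proof -
  have "Emat u ** (Emat a ** M) = M2 u 0 (-1) (uinv u) ** (Emat (a - uinv u) ** M)"
    using uinv_right[OF assms] by (simp add: Emat_def algebra_simps flip: mmul_assoc)
  then show ?thesis
    using Ewalk_twist[OF uinv_right[OF assms]] by simp
qed

section \<open>Elementary moves on words\<close>

text \<open>Relations (3) and (4), applied at the front of a word.\<close>

inductive head_move :: "'a::comm_ring_1 list \<Rightarrow> 'a list \<Rightarrow> bool" where
  zero_last: "head_move [a, 0] []"
| zero: "head_move (a # 0 # b # cs) ((a + b) # cs)"
| unit_last: "u dvd 1 \<Longrightarrow> head_move [a, u] [a - uinv u]"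
| unit: "u dvd 1 \<Longrightarrow> head_move (a # u # b # cs) ((a - uinv u) # (u^2 * b - u) # altmul u cs)"

lemma head_move_zero_twist: "head_move (a # 0 # cs) (twist (-1) (-a) cs)"
proof (cases cs)
  case (Cons b cs')
  then show ?thesis
    using head_move.zero[of a b cs'] by (simp add: twist_Cons add.commute)
qed (simp add: head_move.zero_last)

lemma head_move_unit_twist: "u dvd 1 \<Longrightarrow> head_move (a # u # cs) ((a - uinv u) # twist u (-1) cs)"
  by (cases cs) (simp_all add: twist_Cons head_move.intros)

lemma head_move_twist_cases:
  assumes "head_move as bs"
  obtains a cs where "as = a # 0 # cs" "bs = twist (-1) (-a) cs"
  | a u cs where "u dvd 1" "as = a # u # cs" "bs = (a - uinv u) # twist u (-1) cs"
  using assms by cases (auto simp: twist_Cons add.commute)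

definition word_move :: "'a::comm_ring_1 list \<Rightarrow> 'a list \<Rightarrow> bool" where
  "word_move as bs \<longleftrightarrow> (\<exists>pre as' bs'. as = pre @ as' \<and> bs = pre @ bs' \<and> head_move as' bs')"

lemma ep_step_append:
  assumes "ep_step xs ys"
  shows "ep_step (pre @ xs @ post) (pre @ ys @ post)"
proof -
  obtain l a b c r where "xs = l @ [a, b, c] @ r"
    "(a = c \<and> ys = l @ [a] @ r) \<or> (simplex2 a b c \<and> ys = l @ [a, c] @ r)"
    using assms unfolding ep_step_def by blast
  then show ?thesis
    unfolding ep_step_def
    by (intro exI[of _ "pre @ l"] exI[of _ a] exI[of _ b] exI[of _ c] exI[of _ "r @ post"]) auto
qed

lemma Ewalk_eq_Cons: "Ewalk M as = vtx M # tl (Ewalk M as)"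
  by (cases as) simp_all

lemma simplex2_vtx_Emat_unit:
  assumes "mdet M = 1" "u dvd 1"
  shows "simplex2 (vtx M) (vtx (Emat a ** M)) (vtx (Emat (a - uinv u) ** M))"
proof -
  have "vtx (Emat u ** (Emat a ** M)) = vtx (Emat (a - uinv u) ** M)"
    using Ewalk_unit[OF assms(2), of M a "[]"] by simp
  moreover have "mdet (Emat a ** M) = 1"
    using assms(1) by (simp add: mdet_mmul)
  ultimately show ?thesis
    unfolding simplex2_def using adj_vtx_Emat[OF assms(1)] adj_vtx_Emat[of "Emat a ** M" u] by metis
qed

lemma ep_step_head_move:
  assumes "mdet M = 1" "head_move as bs"
  shows "ep_step (Ewalk M as) (Ewalk M bs)"
  using assms(2)
proof (cases rule: head_move_twist_cases)
  case (1 a cs)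
  obtain W where W: "Ewalk M (twist (-1) (-a) cs) = vtx M # W"
    using Ewalk_eq_Cons by blast
  have "Ewalk M as = [] @ [vtx M, vtx (Emat a ** M), vtx M] @ W" "Ewalk M bs = [] @ [vtx M] @ W"
    using 1 Ewalk_zero[of M a cs] W by simp_all
  then show ?thesis
    unfolding ep_step_def by blast
next
  case (2 a u cs)
  define N where "N = Emat (a - uinv u) ** M"
  obtain W where W: "Ewalk N (twist u (-1) cs) = vtx N # W"
    using Ewalk_eq_Cons by blast
  have "Ewalk M as = [] @ [vtx M, vtx (Emat a ** M), vtx N] @ W"
    "Ewalk M bs = [] @ [vtx M, vtx N] @ W"
    using 2 Ewalk_unit[OF 2(1), of M a cs] W by (simp_all add: N_def)
  moreover have "simplex2 (vtx M) (vtx (Emat a ** M)) (vtx N)"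
    unfolding N_def using simplex2_vtx_Emat_unit assms(1) 2(1) .
  ultimately show ?thesis
    unfolding ep_step_def by blast
qed

lemma head_move_of_ep_step:
  assumes M: "mdet M = 1" and walk: "Ewalk M as = [a, b, c] @ r"
    and step: "(a = c \<and> ys = [a] @ r) \<or> (simplex2 a b c \<and> ys = [a, c] @ r)"
  shows "\<exists>bs. head_move as bs \<and> Ewalk M bs = ys"
proof -
  obtain x y cs where as: "as = x # y # cs"
    using walk by (cases as; cases "tl as") auto
  have abc: "a = vtx M" "b = vtx (Emat x ** M)" "c # r = Ewalk (Emat y ** (Emat x ** M)) cs"
    using walk by (simp_all add: as)
  then have c: "c = vtx (Emat y ** (Emat x ** M))"
    by (metis hd_Ewalk list.sel(1))
  show ?thesis
  proof (cases "a = c \<and> ys = [a] @ r")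
    case True
    then have "y = 0"
      using vtx_Emat_Emat_eq_imp_zero[OF M] abc c by simp
    then have "Ewalk M (twist (-1) (-x) cs) = ys"
      using walk True Ewalk_zero[of M x cs] by (simp add: as)
    then show ?thesis
      using head_move_zero_twist \<open>y = 0\<close> as by blast
  next
    case False
    with step have "adj a c" "ys = [a, c] @ r"
      by (auto simp: simplex2_def)
    then have "y dvd 1"
      using adj_vtx_Emat_Emat_imp_unit[OF M] abc c by simp
    then have "Ewalk M ((x - uinv y) # twist y (-1) cs) = ys"
      using walk \<open>ys = [a, c] @ r\<close> Ewalk_unit[of y M x cs] by (simp add: as)
    then show ?thesis
      using head_move_unit_twist[OF \<open>y dvd 1\<close>] as by blast
  qed
qed

lemma ep_step_word_move:
  assumes M: "mdet M = 1" and "word_move as bs"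
  shows "ep_step (Ewalk M as) (Ewalk M bs)"
proof -
  obtain pre as' bs' where "as = pre @ as'" "bs = pre @ bs'" "head_move as' bs'"
    using assms(2) unfolding word_move_def by blast
  moreover have "mdet (Eprod pre ** M) = 1"
    using M by (simp add: mdet_mmul)
  ultimately show ?thesis
    using ep_step_append[OF ep_step_head_move, of _ _ _ "butlast (Ewalk M pre)" "[]"]
    by (simp add: Ewalk_append)
qed

lemma word_move_of_ep_step:
  assumes M: "mdet M = 1" and "ep_step (Ewalk M as) ys"
  shows "\<exists>bs. word_move as bs \<and> Ewalk M bs = ys"
proof -
  obtain l a b c r where walk: "Ewalk M as = l @ [a, b, c] @ r"
    and step: "(a = c \<and> ys = l @ [a] @ r) \<or> (simplex2 a b c \<and> ys = l @ [a, c] @ r)"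
    using assms(2) unfolding ep_step_def by blast
  obtain pre as' where split: "as = pre @ as'" "l = butlast (Ewalk M pre)"
    "Ewalk (Eprod pre ** M) as' = [a, b, c] @ r"
    using Ewalk_split[of M as l a "[b, c] @ r"] walk by auto
  obtain ys' where ys: "ys = l @ ys'"
    "(a = c \<and> ys' = [a] @ r) \<or> (simplex2 a b c \<and> ys' = [a, c] @ r)"
    using step by blast
  have "mdet (Eprod pre ** M) = 1"
    using M by (simp add: mdet_mmul)
  then obtain bs' where "head_move as' bs'" "Ewalk (Eprod pre ** M) bs' = ys'"
    using head_move_of_ep_step[OF _ split(3) ys(2)] by blast
  then have "word_move as (pre @ bs')" "Ewalk M (pre @ bs') = ys"
    using split ys unfolding word_move_def by (auto simp: Ewalk_append)
  then show ?thesis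
    by blast
qed

section \<open>The edge-path group\<close>

lemma equivclp_map:
  assumes "\<And>x y. r x y \<Longrightarrow> s (f x) (f y)" and "equivclp r x y"
  shows "equivclp s (f x) (f y)"
  using assms(2) by induction (auto intro: equivclp_into_equivclp assms(1))

lemma equivclp_invariant:
  assumes "\<And>x y. r x y \<Longrightarrow> g x = g y" and "equivclp r x y"
  shows "g x = g y"
  using assms(2) by induction (auto dest: assms(1))

lemma loop_eq_refl: "loop_eq xs xs"
  by (simp add: loop_eq_def)

lemma loop_eq_ep_step: "is_loop xs \<Longrightarrow> is_loop ys \<Longrightarrow> ep_step xs ys \<Longrightarrow> loop_eq xs ys"
  unfolding loop_eq_def by (rule r_into_equivclp) simp

lemma loop_eq_is_loop: "loop_eq xs ys \<Longrightarrow> is_loop xs \<Longrightarrow> is_loop ys"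
  unfolding loop_eq_def by (induction rule: equivclp_induct) auto

lemma loop_eq_trans: "loop_eq xs ys \<Longrightarrow> loop_eq ys zs \<Longrightarrow> loop_eq xs zs"
  unfolding loop_eq_def by (rule equivclp_trans)

lemma loop_class_eq_iff: "loop_class xs = loop_class ys \<longleftrightarrow> loop_eq xs ys"
proof
  assume "loop_class xs = loop_class ys"
  then show "loop_eq xs ys"
    using loop_eq_refl[of ys] by (auto simp: loop_class_def)
next
  assume "loop_eq xs ys"
  then have "loop_eq ys xs"
    unfolding loop_eq_def by (rule equivclp_sym)
  with \<open>loop_eq xs ys\<close> show "loop_class xs = loop_class ys"
    unfolding loop_class_def using loop_eq_trans by blast
qed

lemma is_loop_infv: "is_loop [infv]"
  by (simp add: is_loop_iff)

lemma successively_append_overlap: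
  "successively P xs \<Longrightarrow> successively P (last xs # ys) \<Longrightarrow> xs \<noteq> [] \<Longrightarrow> successively P (xs @ ys)"
  by (auto simp: successively_append_iff successively_Cons)

lemma is_loop_append:
  assumes "is_loop xs" "is_loop ys"
  shows "is_loop (xs @ tl ys)"
proof -
  obtain t where ys: "ys = infv # t"
    using assms(2) unfolding is_loop_iff by (metis list.collapse)
  have "successively adj (xs @ t)"
    using assms ys successively_append_overlap[of adj xs t] by (simp add: is_loop_iff)
  moreover have "last (xs @ t) = infv"
    using assms ys by (simp add: is_loop_iff split: if_splits)
  ultimately show ?thesis
    using assms(1) ys by (simp add: is_loop_iff)
qed

lemma loop_append_tl:
  assumes "is_loop xs" "is_loop ys"
  shows "xs @ tl ys = butlast xs @ ys"
proof -
  have "xs = butlast xs @ [infv]" "ys = infv # tl ys"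
    using assms unfolding is_loop_iff by (metis append_butlast_last_id, metis list.collapse)
  then show ?thesis
    by (metis append.assoc append_Cons append_Nil)
qed

lemma loop_eq_append:
  assumes "loop_eq xs xs'" "loop_eq ys ys'" "is_loop xs" "is_loop ys"
  shows "loop_eq (xs @ tl ys) (xs' @ tl ys')"
proof -
  let ?R = "\<lambda>xs ys. is_loop xs \<and> is_loop ys \<and> ep_step xs ys"
  have "?R (x @ tl ys) (y @ tl ys)" if "?R x y" for x y
    using that assms(4) is_loop_append ep_step_append[of x y "[]" "tl ys"] by auto
  then have left: "loop_eq (xs @ tl ys) (xs' @ tl ys)"
    using equivclp_map[of ?R ?R "\<lambda>x. x @ tl ys"] assms(1) unfolding loop_eq_def by blast
  have "is_loop xs'"
    using loop_eq_is_loop assms(1,3) .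
  then have "?R (xs' @ tl x) (xs' @ tl y)" if "?R x y" for x y
  proof -
    have "xs' @ tl x = butlast xs' @ x" "xs' @ tl y = butlast xs' @ y"
      using that loop_append_tl \<open>is_loop xs'\<close> by blast+
    then have "ep_step (xs' @ tl x) (xs' @ tl y)"
      using that ep_step_append[of x y "butlast xs'" "[]"] by simp
    moreover have "is_loop (xs' @ tl x)" "is_loop (xs' @ tl y)"
      using that is_loop_append \<open>is_loop xs'\<close> by blast+
    ultimately show ?thesis
      by blast
  qed
  then have "loop_eq (xs' @ tl ys) (xs' @ tl ys')"
    using equivclp_map[of ?R ?R "\<lambda>y. xs' @ tl y"] assms(2) unfolding loop_eq_def by blast
  with left show ?thesis
    unfolding loop_eq_def by (rule equivclp_trans)
qed

lemma carrier_pi1: "carrier pi1 = {loop_class xs | xs. is_loop xs}"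
  by (simp add: pi1_def)

lemma one_pi1: "\<one>\<^bsub>pi1\<^esub> = loop_class [infv]"
  by (simp add: pi1_def)

lemma mult_pi1:
  assumes "is_loop xs" "is_loop ys"
  shows "loop_class xs \<otimes>\<^bsub>pi1\<^esub> loop_class ys = loop_class (xs @ tl ys)"
proof (intro equalityI subsetI)
  fix zs assume "zs \<in> loop_class xs \<otimes>\<^bsub>pi1\<^esub> loop_class ys"
  then obtain xs' ys' where "loop_eq xs xs'" "loop_eq ys ys'" "loop_eq (xs' @ tl ys') zs"
    unfolding pi1_def loop_class_def by auto
  then show "zs \<in> loop_class (xs @ tl ys)"
    using loop_eq_append[OF _ _ assms] loop_eq_trans unfolding loop_class_def by blast
next
  fix zs assume "zs \<in> loop_class (xs @ tl ys)"
  then show "zs \<in> loop_class xs \<otimes>\<^bsub>pi1\<^esub> loop_class ys"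
    unfolding pi1_def loop_class_def using loop_eq_refl by auto
qed

lemma successively_adj_rev: "successively adj w \<Longrightarrow> successively adj (rev w)"
  by (simp add: adj_sym successively_mono)

lemma is_loop_retrace:
  assumes "successively adj w" "w \<noteq> []" "hd w = infv"
  shows "is_loop (w @ tl (rev w))"
proof -
  have rw: "rev w = last w # tl (rev w)"
    using assms(2) by (metis hd_rev list.collapse rev_is_Nil_conv)
  have "successively adj (rev w)"
    using successively_adj_rev[OF assms(1)] .
  then have "successively adj (last w # tl (rev w))"
    using rw by metis
  then have "successively adj (w @ tl (rev w))"
    using successively_append_overlap[OF assms(1) _ assms(2)] by blast
  moreover have "last (w @ tl (rev w)) = infv"
  proof (cases "tl (rev w) = []")
    case True
    then have "w = [last w]"
      using rw by (metis rev_singleton_conv)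
    then show ?thesis
      using True assms(3) by (metis append.right_neutral list.sel(1))
  next
    case False
    then show ?thesis
      using assms by (simp add: last_rev last_tl)
  qed
  ultimately show ?thesis
    using assms by (simp add: is_loop_iff)
qed

lemma loop_eq_retrace:
  "successively adj w \<Longrightarrow> w \<noteq> [] \<Longrightarrow> hd w = infv \<Longrightarrow> loop_eq (w @ tl (rev w)) [infv]"
proof (induction w rule: rev_induct)
  case Nil
  then show ?case by simp
next
  case (snoc x w)
  show ?case
  proof (cases "w = []")
    case True
    then show ?thesis
      using snoc.prems loop_eq_refl by simp
  next
    case False
    then obtain v y where w: "w = v @ [y]"
      by (metis rev_exhaust)
    have prems: "successively adj w" "hd w = infv"
      using snoc.prems False by (simp_all add: successively_append_iff)
    have "ep_step (v @ [y, x, y] @ rev v) (v @ [y] @ rev v)"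
      unfolding ep_step_def by blast
    moreover have "is_loop (v @ [y, x, y] @ rev v)" "is_loop (v @ [y] @ rev v)"
      using is_loop_retrace[OF snoc.prems] is_loop_retrace[OF prems(1) False prems(2)] w by simp_all
    ultimately have "loop_eq ((w @ [x]) @ tl (rev (w @ [x]))) (w @ tl (rev w))"
      using loop_eq_ep_step w by simp
    then show ?thesis
      using snoc.IH[OF prems(1) False prems(2)] loop_eq_trans by blast
  qed
qed

lemma group_pi1: "group (pi1 :: ('a::comm_ring_1 \<times> 'a) set list set monoid)"
proof (rule groupI)
  fix x y :: "('a \<times> 'a) set list set"
  assume "x \<in> carrier pi1" "y \<in> carrier pi1"
  then show "x \<otimes>\<^bsub>pi1\<^esub> y \<in> carrier pi1"
    unfolding carrier_pi1 using mult_pi1 is_loop_append by blast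
next
  show "\<one>\<^bsub>pi1\<^esub> \<in> carrier (pi1 :: ('a \<times> 'a) set list set monoid)"
    unfolding carrier_pi1 one_pi1 using is_loop_infv by blast
next
  fix x y z :: "('a \<times> 'a) set list set"
  assume "x \<in> carrier pi1" "y \<in> carrier pi1" "z \<in> carrier pi1"
  then obtain xs ys zs where
    loops: "is_loop xs" "is_loop ys" "is_loop zs" and
    classes: "x = loop_class xs" "y = loop_class ys" "z = loop_class zs"
    unfolding carrier_pi1 by blast
  have "(xs @ tl ys) @ tl zs = xs @ tl (ys @ tl zs)"
    using loops(2) by (cases ys) (simp_all add: is_loop_iff)
  then show "x \<otimes>\<^bsub>pi1\<^esub> y \<otimes>\<^bsub>pi1\<^esub> z = x \<otimes>\<^bsub>pi1\<^esub> (y \<otimes>\<^bsub>pi1\<^esub> z)"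
    using loops by (simp add: classes mult_pi1 is_loop_append)
next
  fix x :: "('a \<times> 'a) set list set"
  assume "x \<in> carrier pi1"
  then obtain xs where loop: "is_loop xs" and x: "x = loop_class xs"
    unfolding carrier_pi1 by blast
  then have "[infv] @ tl xs = xs"
    unfolding is_loop_iff by (metis append_Cons append_Nil list.collapse)
  then show "\<one>\<^bsub>pi1\<^esub> \<otimes>\<^bsub>pi1\<^esub> x = x"
    using mult_pi1[OF is_loop_infv loop] by (simp add: one_pi1 x)
next
  fix x :: "('a \<times> 'a) set list set"
  assume "x \<in> carrier pi1"
  then obtain xs where loop: "is_loop xs" and x: "x = loop_class xs"
    unfolding carrier_pi1 by blast
  have rev_loop: "is_loop (rev xs)"
    using loop successively_adj_rev by (auto simp: is_loop_iff hd_rev last_rev)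
  have "loop_eq (rev xs @ tl xs) [infv]"
    using loop_eq_retrace[of "rev xs"] rev_loop by (simp add: is_loop_iff)
  then have "loop_class (rev xs) \<otimes>\<^bsub>pi1\<^esub> x = \<one>\<^bsub>pi1\<^esub>"
    using mult_pi1[OF rev_loop loop] by (simp add: x one_pi1 loop_class_eq_iff)
  moreover have "loop_class (rev xs) \<in> carrier pi1"
    using rev_loop unfolding carrier_pi1 by blast
  ultimately show "\<exists>y\<in>carrier pi1. y \<otimes>\<^bsub>pi1\<^esub> x = \<one>\<^bsub>pi1\<^esub>"
    by blast
qed

section \<open>The presentation\<close>

lemma rels_iff_word_move:
  fixes g :: "'a::comm_ring_1 mat2 \<times> 'a list \<Rightarrow> 'b" and G :: "('b, 'm) monoid_scheme"
  shows "rels G g \<longleftrightarrow>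
    (\<forall>p\<in>Syms. \<forall>q\<in>Syms. concat_sym p q \<in> Syms \<longrightarrow> g p \<otimes>\<^bsub>G\<^esub> g q = g (concat_sym p q)) \<and>
    (\<forall>X\<in>Bgrp. g (X, []) = \<one>\<^bsub>G\<^esub>) \<and>
    (\<forall>X as bs. word_move as bs \<longrightarrow> (X, as) \<in> Syms \<longrightarrow> (X, bs) \<in> Syms \<longrightarrow> g (X, as) = g (X, bs))"
proof -
  let ?moves = "\<forall>X as bs. word_move as bs \<longrightarrow> (X, as) \<in> Syms \<longrightarrow> (X, bs) \<in> Syms \<longrightarrow>
    g (X, as) = g (X, bs)"
  have "?moves \<longleftrightarrow>
    (\<forall>X as a. (X, as @ [a, 0]) \<in> Syms \<longrightarrow> (X, as) \<in> Syms \<longrightarrow>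
        g (X, as @ [a, 0]) = g (X, as)) \<and>
    (\<forall>X as a b cs. (X, as @ [a, 0, b] @ cs) \<in> Syms \<longrightarrow> (X, as @ [a + b] @ cs) \<in> Syms \<longrightarrow>
        g (X, as @ [a, 0, b] @ cs) = g (X, as @ [a + b] @ cs)) \<and>
    (\<forall>X as a u. u dvd 1 \<longrightarrow> (X, as @ [a, u]) \<in> Syms \<longrightarrow> (X, as @ [a - uinv u]) \<in> Syms \<longrightarrow>
        g (X, as @ [a, u]) = g (X, as @ [a - uinv u])) \<and>
    (\<forall>X as a u b cs. u dvd 1 \<longrightarrow> (X, as @ [a, u, b] @ cs) \<in> Syms \<longrightarrow>
        (X, as @ [a - uinv u, u^2 * b - u] @ altmul u cs) \<in> Syms \<longrightarrow>
        g (X, as @ [a, u, b] @ cs) = g (X, as @ [a - uinv u, u^2 * b - u] @ altmul u cs))"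
    (is "_ \<longleftrightarrow> ?relations")
  proof
    assume moves: ?moves
    have "word_move (pre @ as) (pre @ bs)" if "head_move as bs" for pre as bs :: "'a list"
      using that unfolding word_move_def by blast
    note word_moves = this[OF head_move.zero_last, simplified] this[OF head_move.zero]
      this[OF head_move.unit_last] this[OF head_move.unit]
    show ?relations
      by (intro conjI allI impI; rule moves[rule_format]) (simp_all add: word_moves)
  next
    assume ?relations
    note relations = this[unfolded append_Cons append_Nil]
    show ?moves
    proof (intro allI impI)
      fix X :: "'a mat2" and as bs :: "'a list"
      assume "word_move as bs" and syms: "(X, as) \<in> Syms" "(X, bs) \<in> Syms"
      then obtain pre as' bs' where "as = pre @ as'" "bs = pre @ bs'" "head_move as' bs'"
        unfolding word_move_def by blast
      from \<open>head_move as' bs'\<close> \<open>as = pre @ as'\<close> \<open>bs = pre @ bs'\<close> syms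
      show "g (X, as) = g (X, bs)"
        by cases (simp_all add: relations[THEN conjunct1, rule_format]
            relations[THEN conjunct2, THEN conjunct1, rule_format]
            relations[THEN conjunct2, THEN conjunct2, THEN conjunct1, rule_format]
            relations[THEN conjunct2, THEN conjunct2, THEN conjunct2, rule_format])
    qed
  qed
  then show ?thesis
    unfolding rels_def by (simp only:)
qed

lemma is_loop_sym_loop: "s \<in> Syms \<Longrightarrow> is_loop (sym_loop s)"
  by (cases s) (simp add: Syms_iff_is_loop sym_loop_eq_Ewalk)

lemma sym_loop_concat_sym:
  assumes p: "p \<in> Syms" and q: "q \<in> Syms"
  shows "concat_sym p q \<in> Syms \<and> sym_loop (concat_sym p q) = sym_loop p @ tl (sym_loop q)"
proof -
  obtain X as Y bs where pq: "p = (X, as)" "q = (Y, bs)"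
    by fastforce
  define T where "T = Eprod as ** X"
  have "Y ** sl_inv T \<in> Bgrp"
    using p q by (intro Bgrp_mmul_sl_inv) (simp_all add: pq T_def Syms_def)
  then obtain d e d' where Z: "Y ** sl_inv T = M2 d 0 e d'" "d * d' = 1"
    by (auto simp: Bgrp_def SL2_def)
  have "M2 d 0 e d' ** T = Y"
    using sl_inv_mmul[of T] p unfolding Z(1)[symmetric]
    by (simp add: mmul_assoc T_def pq Syms_iff_is_loop mdet_mmul)
  then have "Ewalk X (as @ twist d e bs) = butlast (Ewalk X as) @ Ewalk Y bs"
    using Ewalk_twist[OF Z(2), of e T bs] by (simp add: Ewalk_append T_def)
  also have "\<dots> = Ewalk X as @ tl (Ewalk Y bs)"
    using loop_append_tl[of "Ewalk X as" "Ewalk Y bs"] p q by (simp add: pq Syms_iff_is_loop)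
  finally have walk: "Ewalk X (as @ twist d e bs) = Ewalk X as @ tl (Ewalk Y bs)" .
  have concat: "concat_sym p q = (X, as @ twist d e bs)"
    using Z(1) by (simp add: concat_sym_def pq Tsym_def T_def)
  have "is_loop (Ewalk X (as @ twist d e bs))"
    unfolding walk using is_loop_append[of "Ewalk X as" "Ewalk Y bs"] p q
    by (simp add: pq Syms_iff_is_loop)
  then show ?thesis
    using p unfolding concat by (simp add: walk pq Syms_iff_is_loop sym_loop_eq_Ewalk)
qed

lemma rels_pi1: "rels pi1 (sym :: 'a::comm_ring_1 mat2 \<times> 'a list \<Rightarrow> _)"
  unfolding rels_iff_word_move
proof (intro conjI ballI allI impI)
  fix p q :: "'a mat2 \<times> 'a list"
  assume "p \<in> Syms" "q \<in> Syms"
  then have "sym p \<otimes>\<^bsub>pi1\<^esub> sym q = loop_class (sym_loop p @ tl (sym_loop q))"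
    by (simp add: sym_def mult_pi1 is_loop_sym_loop)
  then show "sym p \<otimes>\<^bsub>pi1\<^esub> sym q = sym (concat_sym p q)"
    using sym_loop_concat_sym[OF \<open>p \<in> Syms\<close> \<open>q \<in> Syms\<close>] by (simp add: sym_def)
next
  fix X :: "'a mat2"
  assume "X \<in> Bgrp"
  then have "vtx X = infv"
    using vtx_eq_infv_iff Bgrp_mdet by blast
  then show "sym (X, []) = \<one>\<^bsub>pi1\<^esub>"
    by (simp add: sym_def sym_loop_eq_Ewalk one_pi1)
next
  fix X :: "'a mat2" and as bs
  assume "word_move as bs" "(X, as) \<in> Syms" "(X, bs) \<in> Syms"
  then show "sym (X, as) = sym (X, bs)"
    using ep_step_word_move[of X as bs] loop_eq_ep_step[of "Ewalk X as" "Ewalk X bs"]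
    by (simp add: sym_def sym_loop_eq_Ewalk loop_class_eq_iff Syms_iff_is_loop)
qed

lemma carrier_pi1_sym: "carrier pi1 = {sym (mone, as) | as. (mone, as) \<in> Syms}"
  unfolding carrier_pi1 using is_loop_eq_Ewalk
  by (auto simp: Syms_iff_is_loop sym_def sym_loop_eq_Ewalk)

lemma generate_sym_pi1:
  "carrier (pi1 :: ('a::comm_ring_1 \<times> 'a) set list set monoid) =
   generate pi1 (sym ` (Syms :: ('a mat2 \<times> 'a list) set))"
proof
  show "carrier pi1 \<subseteq> generate pi1 (sym ` (Syms :: ('a mat2 \<times> 'a list) set))"
    unfolding carrier_pi1_sym by (auto intro: generate.incl)
next
  have "sym ` (Syms :: ('a mat2 \<times> 'a list) set) \<subseteq> carrier pi1"
    using is_loop_sym_loop by (auto simp: sym_def carrier_pi1)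
  then show "generate pi1 (sym ` (Syms :: ('a mat2 \<times> 'a list) set)) \<subseteq> carrier pi1"
    using group.generate_in_carrier[OF group_pi1] by blast
qed

text \<open>Unspecified unless \<open>xs\<close> is a loop.\<close>

definition loop_word :: "('a::comm_ring_1 \<times> 'a) set list \<Rightarrow> 'a list" where
  "loop_word xs = (THE as. Ewalk mone as = xs)"

lemma loop_word_Ewalk [simp]: "loop_word (Ewalk mone as) = as"
  unfolding loop_word_def by (rule the_equality) (auto dest: Ewalk_inj[OF mdet_mone])

lemma Ewalk_loop_word: "is_loop xs \<Longrightarrow> Ewalk mone (loop_word xs) = xs"
  using is_loop_eq_Ewalk by fastforce

definition loop_val :: "('a::comm_ring_1 mat2 \<times> 'a list \<Rightarrow> 'h) \<Rightarrow> ('a \<times> 'a) set list \<Rightarrow> 'h" where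
  "loop_val f xs = f (mone, loop_word xs)"

lemma loop_val_loop_eq:
  fixes f :: "'a::comm_ring_1 mat2 \<times> 'a list \<Rightarrow> 'h"
  assumes "rels G f" "loop_eq xs ys"
  shows "loop_val f xs = loop_val f ys"
  using assms(2) unfolding loop_eq_def
proof (rule equivclp_invariant[rotated])
  fix xs ys :: "('a \<times> 'a) set list"
  assume "is_loop xs \<and> is_loop ys \<and> ep_step xs ys"
  then have loops: "is_loop xs" "is_loop ys" and "ep_step (Ewalk mone (loop_word xs)) ys"
    by (simp_all add: Ewalk_loop_word)
  then obtain bs where move: "word_move (loop_word xs) bs" and ys: "Ewalk mone bs = ys"
    using word_move_of_ep_step[OF mdet_mone] by blast
  have "(mone, loop_word xs) \<in> Syms" "(mone, bs) \<in> Syms"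
    using loops ys by (simp_all add: Syms_iff_is_loop Ewalk_loop_word)
  then have "f (mone, loop_word xs) = f (mone, bs)"
    using assms(1) move unfolding rels_iff_word_move by blast
  then show "loop_val f xs = loop_val f ys"
    by (simp add: loop_val_def flip: ys)
qed

lemma loop_val_sym_loop:
  assumes "monoid G" "f \<in> Syms \<rightarrow> carrier G" "rels G f" "s \<in> Syms"
  shows "loop_val f (sym_loop s) = f s"
proof -
  txt \<open>By (1) and (2), \<open>s\<close> has the same value as its product with the trivial symbol at the
    identity matrix, which is based at the identity.\<close>
  define c where "c = concat_sym (mone, []) s"
  have one: "(mone, []) \<in> Syms"
    by (simp add: Syms_def mone_in_Bgrp)
  then have c: "c \<in> Syms" "sym_loop c = [infv] @ tl (sym_loop s)"
    using sym_loop_concat_sym[OF one assms(4)] by (simp_all add: c_def sym_loop_eq_Ewalk vtx_mone)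
  have "[infv] @ tl (sym_loop s) = sym_loop s"
    using is_loop_sym_loop[OF assms(4)] unfolding is_loop_iff by (metis append_Cons append_Nil list.collapse)
  moreover have "fst c = mone"
    by (simp add: c_def concat_sym_def Let_def)
  ultimately have "loop_val f (sym_loop s) = f c"
    using c by (metis loop_val_def loop_word_Ewalk prod.collapse sym_loop_eq_Ewalk)
  also have "\<dots> = f (mone, []) \<otimes>\<^bsub>G\<^esub> f s"
    using assms(3,4) one c(1) unfolding rels_iff_word_move c_def by metis
  also have "\<dots> = f s"
  proof -
    have "f (mone, []) = \<one>\<^bsub>G\<^esub>"
      using assms(3) mone_in_Bgrp unfolding rels_iff_word_move by blast
    then show ?thesis
      using assms(1,2,4) by (simp add: Pi_iff)
  qed
  finally show ?thesis .
qed

lemma pi1_universal: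
  fixes f :: "'a::comm_ring_1 mat2 \<times> 'a list \<Rightarrow> 'h" and H :: "('h, 'm) monoid_scheme"
  assumes "monoid H" "f \<in> Syms \<rightarrow> carrier H" "rels H f"
  shows "\<exists>h \<in> hom pi1 H. \<forall>s\<in>Syms. h (sym s) = f s"
proof -
  define h :: "('a \<times> 'a) set list set \<Rightarrow> 'h" where "h C = loop_val f (SOME xs. xs \<in> C)" for C
  have h_class: "h (loop_class xs) = loop_val f xs" for xs
  proof -
    have "xs \<in> loop_class xs"
      by (simp add: loop_class_def loop_eq_refl)
    then have "(SOME ys. ys \<in> loop_class xs) \<in> loop_class xs"
      by (rule someI)
    then have "loop_eq xs (SOME ys. ys \<in> loop_class xs)"
      by (simp add: loop_class_def)
    then show ?thesis
      unfolding h_def by (rule loop_val_loop_eq[OF assms(3), symmetric])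
  qed
  have h_sym: "h (sym s) = f s" if "s \<in> Syms" for s
    using loop_val_sym_loop[OF assms that] by (simp add: sym_def h_class)
  have "h \<in> hom pi1 H"
  proof (rule homI)
    fix C :: "('a \<times> 'a) set list set"
    assume "C \<in> carrier pi1"
    then obtain as where "(mone, as) \<in> Syms" "C = sym (mone, as)"
      unfolding carrier_pi1_sym by blast
    then show "h C \<in> carrier H"
      using h_sym assms(2) by auto
  next
    fix C D :: "('a \<times> 'a) set list set"
    assume "C \<in> carrier pi1" "D \<in> carrier pi1"
    then obtain p q where pq: "p \<in> Syms" "q \<in> Syms" "C = sym p" "D = sym q"
      unfolding carrier_pi1_sym by blast
    have pq_Syms: "concat_sym p q \<in> Syms"
      using sym_loop_concat_sym[OF pq(1,2)] ..
    have "C \<otimes>\<^bsub>pi1\<^esub> D = sym (concat_sym p q)"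
      using rels_pi1 pq pq_Syms unfolding rels_iff_word_move by blast
    moreover have "f p \<otimes>\<^bsub>H\<^esub> f q = f (concat_sym p q)"
      using assms(3) pq pq_Syms unfolding rels_iff_word_move by blast
    ultimately show "h (C \<otimes>\<^bsub>pi1\<^esub> D) = h C \<otimes>\<^bsub>H\<^esub> h D"
      using pq pq_Syms h_sym by simp
  qed
  then show ?thesis
    using h_sym by blast
qed

theorem theorem6p1:
  shows "group (pi1 :: ('a::comm_ring_1 \<times> 'a) set list set monoid) \<and>
    carrier (pi1 :: ('a \<times> 'a) set list set monoid) = generate pi1 (sym ` (Syms :: ('a mat2 \<times> 'a list) set)) \<and>
    rels (pi1 :: ('a \<times> 'a) set list set monoid) (sym :: 'a mat2 \<times> 'a list \<Rightarrow> _) \<and>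
    (\<forall>(H :: 'h monoid) (f :: 'a mat2 \<times> 'a list \<Rightarrow> 'h).
       group H \<longrightarrow> f \<in> Syms \<rightarrow> carrier H \<longrightarrow> rels H f \<longrightarrow>
       (\<exists>h \<in> hom pi1 H. \<forall>s\<in>Syms. h (sym s) = f s))"
  using group_pi1 generate_sym_pi1 rels_pi1 pi1_universal[OF group.is_monoid] by blast

end
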